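(* Let $q^N$ be probability distributions on $\mathbb{Z}$ satisfying assumptions (1)–(5) below, let $\phi^N(\theta)=\sum_z q^N(z)e^{iz\theta}$ be the characteristic function of $q^N$, and let $L=N^{1/2}$. There are constants $a,b>0$ such that for all $N$ and $|\theta|\le\pi$, $$|\phi^N(\theta)|\le\begin{cases}1-bN\theta^2,&|\theta|\le 4/(2L+1),\\ 1-a,&4/(2L+1)<|\theta|\le\pi.\end{cases}$$ Consequently, for any $\varepsilon\in(0,\pi]$ there is $c>0$ independent of $N$ such that $|\phi^N(\theta)|\le e^{-c}$ whenever $\varepsilon/\sqrt N<|\theta|\le\pi$.
   Context: Assumptions: (1) $q^N(z)=q^N(-z)$; (2) $\sum_z z^2q^N(z)=\sigma_N^2N$ with $\sigma_N\to\sigma\in(0,\infty)$; (3) there is $h>0$ independent of $N$ with $q^N(z)\ge h/\sqrt N$ for $|z|\le N^{1/2}$; (4) $q^N(z)\le C\exp(-c|z|/\sqrt N)$ with $c,C>0$ independent of $N$; (5) $q^N(z)=0$ for $|z|>B\sqrt N\log N$ with $B$ independent of $N$. *)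

theory Defs
  imports "HOL-Analysis.Analysis"
begin

definition char_fun :: "(int \<Rightarrow> real) \<Rightarrow> real \<Rightarrow> complex" where
  "char_fun p \<theta> = (\<Sum>\<^sub>\<infinity>z\<in>UNIV. complex_of_real (p z) * cis (real_of_int z * \<theta>))"

end

theory Submission
  imports Defs
begin

text \<open>For a symmetric distribution \<open>p\<close> the characteristic function is the real number
  \<open>c = \<Sum> p z cos(z\<theta>)\<close>, and \<open>|c| \<le> 1 - t\<close> as soon as both \<open>\<Sum> p z (1 - cos(z\<theta>))\<close> and
  \<open>\<Sum> p z (1 + cos(z\<theta>))\<close> are at least \<open>t\<close>. Both sums are bounded below using only the mass
  \<open>h/L\<close> that \<open>p\<close> puts on each point of the window \<open>|z| \<le> L = \<surd>N\<close>. For \<open>L|\<theta>| \<le> 2\<close> the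
  Taylor bound \<open>1 - cos x \<ge> x\<^sup>2/3\<close> summed over \<open>z = 1..L\<close> gives \<open>h L\<^sup>2\<theta>\<^sup>2/72\<close>, while
  \<open>cos(z\<theta>) \<ge> 0\<close> for \<open>|z| \<le> L/2\<close>. For larger \<open>|\<theta>|\<close> the Dirichlet kernel identity
  \<open>sin(\<theta>/2) \<Sum>\<^bsub>|z|\<le>n\<^esub> cos(z\<theta>) = sin((n + 1/2)\<theta>)\<close> shows that \<open>cos(z\<theta>)\<close> averages out over the
  window, so both sums are of order \<open>h\<close>.\<close>

lemma cos_ge_one_minus_sq_div_2: "1 - x\<^sup>2 / 2 \<le> cos (x::real)"
proof -
  let ?f = "\<lambda>x. cos x - 1 + x\<^sup>2 / 2"
  have "?f 0 \<le> ?f \<bar>x\<bar>"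
  proof (rule DERIV_nonneg_imp_nondecreasing[of 0])
    fix u :: real assume "0 \<le> u"
    then show "\<exists>y. (?f has_real_derivative y) (at u) \<and> 0 \<le> y"
      by (intro exI[of _ "u - sin u"]) (auto intro!: derivative_eq_intros simp: sin_x_le_x)
  qed simp
  then show ?thesis by simp
qed

lemma sin_ge_x_minus_cube_div_6:
  fixes x :: real assumes "0 \<le> x" shows "x - x ^ 3 / 6 \<le> sin x"
proof -
  let ?f = "\<lambda>x. sin x - x + x ^ 3 / 6"
  have "?f 0 \<le> ?f x"
  proof (rule DERIV_nonneg_imp_nondecreasing[OF assms])
    fix u :: real
    show "\<exists>y. (?f has_real_derivative y) (at u) \<and> 0 \<le> y"
      using cos_ge_one_minus_sq_div_2[of u]
      by (intro exI[of _ "cos u - 1 + u\<^sup>2 / 2"]) (auto intro!: derivative_eq_intros simp: power2_eq_square)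
  qed
  then show ?thesis by simp
qed

lemma cos_le_taylor_4: "cos (x::real) \<le> 1 - x\<^sup>2 / 2 + x ^ 4 / 24"
proof -
  let ?f = "\<lambda>x. 1 - x\<^sup>2 / 2 + x ^ 4 / 24 - cos x"
  have "?f 0 \<le> ?f \<bar>x\<bar>"
  proof (rule DERIV_nonneg_imp_nondecreasing[of 0])
    fix u :: real assume "0 \<le> u"
    then show "\<exists>y. (?f has_real_derivative y) (at u) \<and> 0 \<le> y"
      using sin_ge_x_minus_cube_div_6[of u]
      by (intro exI[of _ "sin u - u + u ^ 3 / 6"])
         (auto intro!: derivative_eq_intros simp: eval_nat_numeral)
  qed simp
  then show ?thesis by simp
qed

lemma one_minus_cos_ge:
  fixes x :: real assumes "x\<^sup>2 \<le> c" shows "x\<^sup>2 * (12 - c) / 24 \<le> 1 - cos x"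
proof -
  have "x ^ 4 \<le> c * x\<^sup>2"
    using mult_right_mono[OF assms, of "x\<^sup>2"] by (simp add: eval_nat_numeral)
  then show ?thesis using cos_le_taylor_4[of x] by (simp add: field_simps)
qed

lemma sin_ge_linear:
  fixes y :: real assumes "0 \<le> y" "y\<^sup>2 \<le> c" shows "y * (1 - c / 6) \<le> sin y"
proof -
  have "y ^ 3 \<le> c * y"
    using mult_right_mono[OF assms(2) assms(1)] by (simp add: eval_nat_numeral)
  then show ?thesis using sin_ge_x_minus_cube_div_6[OF assms(1)] by (simp add: field_simps)
qed

lemma sin_half_mult_sum_cos:
  "sin (\<theta>/2) * (\<Sum>z\<in>{-int n..int n}. cos (real_of_int z * \<theta>)) = sin ((real n + 1/2) * \<theta>)"
proof (induction n)
  case 0 then show ?case by simp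
next
  case (Suc n)
  let ?\<alpha> = "(real n + 1) * \<theta>"
  have "{-int (Suc n)..int (Suc n)} = insert (int n + 1) (insert (-int n - 1) {-int n..int n})"
    by auto
  moreover have "cos (real_of_int (- int n - 1) * \<theta>) = cos ?\<alpha>"
  proof -
    have "real_of_int (- int n - 1) * \<theta> = - ?\<alpha>" by (simp add: algebra_simps)
    then show ?thesis by (simp only: cos_minus)
  qed
  ultimately have "(\<Sum>z\<in>{-int (Suc n)..int (Suc n)}. cos (real_of_int z * \<theta>))
      = 2 * cos ?\<alpha> + (\<Sum>z\<in>{-int n..int n}. cos (real_of_int z * \<theta>))"
    by simp
  then have "sin (\<theta>/2) * (\<Sum>z\<in>{-int (Suc n)..int (Suc n)}. cos (real_of_int z * \<theta>))
      = 2 * sin (\<theta>/2) * cos ?\<alpha> + sin (?\<alpha> - \<theta>/2)"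
    using Suc.IH by (simp add: algebra_simps)
  also have "\<dots> = sin (?\<alpha> + \<theta>/2)"
    unfolding sin_add sin_diff by (simp add: algebra_simps)
  also have "?\<alpha> + \<theta>/2 = (real (Suc n) + 1/2) * \<theta>"
    by (simp add: algebra_simps)
  finally show ?case .
qed

lemma abs_sum_cos_le:
  assumes "sin (\<theta>/2) \<noteq> 0"
  shows "\<bar>\<Sum>z\<in>{-int n..int n}. cos (real_of_int z * \<theta>)\<bar> \<le> 1 / \<bar>sin (\<theta>/2)\<bar>"
proof -
  have "\<bar>sin (\<theta>/2)\<bar> * \<bar>\<Sum>z\<in>{-int n..int n}. cos (real_of_int z * \<theta>)\<bar> \<le> 1"
    using sin_half_mult_sum_cos[of \<theta> n] by (simp flip: abs_mult)
  with assms show ?thesis by (simp add: field_simps)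
qed

lemma char_fun_symmetric:
  fixes p :: "int \<Rightarrow> real"
  assumes sum1: "(p has_sum 1) UNIV" and nonneg: "\<And>z. 0 \<le> p z" and sym: "\<And>z. p z = p (-z)"
  obtains c where "char_fun p \<theta> = complex_of_real c"
    and "((\<lambda>z. p z * (1 - cos (real_of_int z * \<theta>))) has_sum (1 - c)) UNIV"
    and "((\<lambda>z. p z * (1 + cos (real_of_int z * \<theta>))) has_sum (1 + c)) UNIV"
proof -
  have summable: "p summable_on UNIV" using sum1 by (auto simp: summable_on_def)
  define f where "f z = p z * cos (real_of_int z * \<theta>)" for z
  define g where "g z = p z * sin (real_of_int z * \<theta>)" for z
  have "f summable_on UNIV"
  proof (rule abs_summable_summable, rule summable_on_comparison_test[OF summable])
    show "norm (f z) \<le> p z" for z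
      using nonneg[of z] by (simp add: f_def abs_mult mult_left_le)
  qed simp
  have "g summable_on UNIV"
  proof (rule abs_summable_summable, rule summable_on_comparison_test[OF summable])
    show "norm (g z) \<le> p z" for z
      using nonneg[of z] by (simp add: g_def abs_mult mult_left_le)
  qed simp
  define c where "c = infsum f UNIV"
  have f_sum: "(f has_sum c) UNIV" using \<open>f summable_on UNIV\<close> by (simp add: c_def)
  have "infsum g UNIV = infsum (\<lambda>z. g (- z)) UNIV"
    by (rule infsum_reindex_bij_betw[symmetric]) (auto intro!: bij_betwI[of _ _ _ uminus])
  also have "\<dots> = infsum (\<lambda>z. - g z) UNIV"
    by (rule infsum_cong) (simp add: g_def sym[symmetric])
  also have "\<dots> = - infsum g UNIV"
    by (rule infsum_uminus)
  finally have "(g has_sum 0) UNIV"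
    using has_sum_infsum[OF \<open>g summable_on UNIV\<close>] by simp
  then have "((\<lambda>z. complex_of_real (g z)) has_sum 0) UNIV"
    using has_sum_of_real by fastforce
  then have "((\<lambda>z. complex_of_real (f z) + \<i> * complex_of_real (g z))
      has_sum (complex_of_real c + \<i> * 0)) UNIV"
    by (intro has_sum_add has_sum_cmult_right has_sum_of_real f_sum)
  moreover have "(\<lambda>z. complex_of_real (f z) + \<i> * complex_of_real (g z))
      = (\<lambda>z. complex_of_real (p z) * cis (real_of_int z * \<theta>))"
    by (auto simp: f_def g_def cis.ctr complex_eq_iff)
  ultimately have "char_fun p \<theta> = complex_of_real c"
    unfolding char_fun_def by (simp add: infsumI)
  moreover have "((\<lambda>z. p z + - f z) has_sum (1 + - c)) UNIV"
    by (intro has_sum_add has_sum_uminusI sum1 f_sum)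
  moreover have "((\<lambda>z. p z + f z) has_sum (1 + c)) UNIV"
    by (intro has_sum_add sum1 f_sum)
  ultimately show ?thesis
    by (intro that) (simp_all add: f_def algebra_simps)
qed

lemma one_plus_cos_nonneg: "0 \<le> 1 + cos (x::real)"
  using cos_ge_minus_one[of x] by linarith

lemma norm_char_fun_le:
  fixes p :: "int \<Rightarrow> real"
  assumes "(p has_sum 1) UNIV" and nonneg: "\<And>z. 0 \<le> p z" and "\<And>z. p z = p (-z)"
    and "finite F" "t \<le> (\<Sum>z\<in>F. p z * (1 - cos (real_of_int z * \<theta>)))"
    and "finite G" "t \<le> (\<Sum>z\<in>G. p z * (1 + cos (real_of_int z * \<theta>)))"
  shows "cmod (char_fun p \<theta>) \<le> 1 - t"
proof -
  obtain c where c: "char_fun p \<theta> = complex_of_real c"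
     "((\<lambda>z. p z * (1 - cos (real_of_int z * \<theta>))) has_sum (1 - c)) UNIV"
     "((\<lambda>z. p z * (1 + cos (real_of_int z * \<theta>))) has_sum (1 + c)) UNIV"
    by (rule char_fun_symmetric[OF assms(1-3)])
  have "(\<Sum>z\<in>F. p z * (1 - cos (real_of_int z * \<theta>))) \<le> 1 - c"
    by (rule finite_sum_le_has_sum[OF c(2) \<open>finite F\<close>]) (auto intro!: mult_nonneg_nonneg nonneg)
  moreover have "(\<Sum>z\<in>G. p z * (1 + cos (real_of_int z * \<theta>))) \<le> 1 + c"
    by (rule finite_sum_le_has_sum[OF c(3) \<open>finite G\<close>])
       (auto intro!: mult_nonneg_nonneg nonneg one_plus_cos_nonneg)
  ultimately show ?thesis
    using assms(5,7) by (simp add: c(1) abs_le_iff)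
qed

lemma sum_of_squares_ge: "real M ^ 3 / 3 \<le> (\<Sum>k=1..M. (real k)\<^sup>2)"
proof (induction M)
  case (Suc M)
  have "real (Suc M) ^ 3 / 3 \<le> real M ^ 3 / 3 + (real (Suc M))\<^sup>2"
    by (simp add: power2_eq_square power3_eq_cube algebra_simps)
  then show ?case using Suc.IH by simp
qed simp

lemma abs_sin_half_ge:
  fixes \<theta> :: real assumes "\<bar>\<theta>\<bar> \<le> pi" shows "7/24 * \<bar>\<theta>\<bar> \<le> \<bar>sin (\<theta>/2)\<bar>"
proof -
  have "\<bar>\<theta>\<bar>/2 \<le> 1.58" using assms pi_approx by simp
  then have "(\<bar>\<theta>\<bar>/2)\<^sup>2 \<le> 5/2"
    using power_mono[of "\<bar>\<theta>\<bar>/2" "1.58" 2] by (simp add: power2_eq_square)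
  then have "7/24 * \<bar>\<theta>\<bar> \<le> sin (\<bar>\<theta>\<bar>/2)"
    using sin_ge_linear[of "\<bar>\<theta>\<bar>/2" "5/2"] by simp
  also have "sin (\<bar>\<theta>\<bar>/2) = \<bar>sin (\<theta>/2)\<bar>"
    using sin_ge_zero[of "\<bar>\<theta>\<bar>/2"] assms by (cases "0 \<le> \<theta>") auto
  finally show ?thesis .
qed

lemma mult_le_2_of_small_angle:
  fixes L \<theta> :: real assumes "0 \<le> L" "\<bar>\<theta>\<bar> \<le> 4 / (2 * L + 1)" shows "L * \<bar>\<theta>\<bar> \<le> 2"
proof -
  have "L * \<bar>\<theta>\<bar> \<le> L * (4 / (2 * L + 1))" using assms by (intro mult_left_mono) auto
  also have "\<dots> \<le> 2" using assms(1) by (simp add: field_simps)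
  finally show ?thesis .
qed

locale window_lower_bound =
  fixes p :: "int \<Rightarrow> real" and L h :: real
  assumes L_ge_1: "1 \<le> L" and h_pos: "0 < h"
    and window: "\<And>z. \<bar>real_of_int z\<bar> \<le> L \<Longrightarrow> h / L \<le> p z"
begin

lemma window_sum_ge:
  assumes "\<And>z. z \<in> F \<Longrightarrow> \<bar>real_of_int z\<bar> \<le> L" and "\<And>z. z \<in> F \<Longrightarrow> 0 \<le> w z"
  shows "h / L * (\<Sum>z\<in>F. w z) \<le> (\<Sum>z\<in>F. p z * w z)"
proof -
  have "h / L * w z \<le> p z * w z" if "z \<in> F" for z
    using assms window that by (intro mult_right_mono) auto
  then show ?thesis by (simp add: sum_distrib_left sum_mono)
qed

lemma one_minus_cos_mass_small_angle:
  assumes "\<bar>\<theta>\<bar> \<le> 4 / (2 * L + 1)"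
  shows "h / 72 * L\<^sup>2 * \<theta>\<^sup>2 \<le> (\<Sum>z=1..\<lfloor>L\<rfloor>. p z * (1 - cos (real_of_int z * \<theta>)))"
proof -
  define M where "M = nat \<lfloor>L\<rfloor>"
  have "real M = \<lfloor>L\<rfloor>" "1 \<le> \<lfloor>L\<rfloor>" using L_ge_1 by (simp_all add: M_def)
  then have M: "L / 2 \<le> real M" "real M \<le> L" by linarith+
  have set: "{1..\<lfloor>L\<rfloor>} = int ` {1..M}"
    using L_ge_1 by (simp add: M_def image_int_atLeastAtMost)
  have "L * \<bar>\<theta>\<bar> \<le> 2" using assms L_ge_1 by (intro mult_le_2_of_small_angle) auto
  have "h / 72 * L\<^sup>2 * \<theta>\<^sup>2 = h / L * (\<theta>\<^sup>2 / 3) * ((L/2) ^ 3 / 3)"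
    using L_ge_1 by (simp add: field_simps power2_eq_square power3_eq_cube)
  also have "\<dots> \<le> h / L * (\<theta>\<^sup>2 / 3) * (real M ^ 3 / 3)"
    using M L_ge_1 h_pos by (intro mult_left_mono divide_right_mono power_mono) auto
  also have "\<dots> \<le> h / L * (\<theta>\<^sup>2 / 3) * (\<Sum>k=1..M. (real k)\<^sup>2)"
    using sum_of_squares_ge L_ge_1 h_pos by (intro mult_left_mono) auto
  also have "\<dots> = h / L * (\<Sum>k=1..M. (real k * \<theta>)\<^sup>2 * (12 - 4) / 24)"
    by (simp add: sum_distrib_left sum_divide_distrib power_mult_distrib mult_ac)
  also have "\<dots> \<le> h / L * (\<Sum>k=1..M. 1 - cos (real k * \<theta>))"
  proof (intro mult_left_mono sum_mono one_minus_cos_ge)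
    fix k assume "k \<in> {1..M}"
    then have "\<bar>real k * \<theta>\<bar> \<le> 2"
      using M \<open>L * \<bar>\<theta>\<bar> \<le> 2\<close> mult_right_mono[of "real k" L "\<bar>\<theta>\<bar>"] by (simp add: abs_mult)
    then show "(real k * \<theta>)\<^sup>2 \<le> 4"
      using power_mono[of "\<bar>real k * \<theta>\<bar>" 2 2] by simp
  qed (use h_pos L_ge_1 in auto)
  also have "\<dots> = h / L * (\<Sum>z=1..\<lfloor>L\<rfloor>. 1 - cos (real_of_int z * \<theta>))"
    unfolding set by (subst sum.reindex) (auto simp: inj_on_def)
  also have "\<dots> \<le> (\<Sum>z=1..\<lfloor>L\<rfloor>. p z * (1 - cos (real_of_int z * \<theta>)))"
    by (rule window_sum_ge) (auto simp: le_floor_iff)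
  finally show ?thesis .
qed

lemma one_plus_cos_mass_small_angle:
  assumes "\<bar>\<theta>\<bar> \<le> 4 / (2 * L + 1)"
  shows "h / 2 \<le> (\<Sum>z=0..\<lfloor>L/2\<rfloor>. p z * (1 + cos (real_of_int z * \<theta>)))"
proof -
  have "L * \<bar>\<theta>\<bar> \<le> 2" using assms L_ge_1 by (intro mult_le_2_of_small_angle) auto
  have half: "0 \<le> real_of_int z \<and> real_of_int z \<le> L / 2" if "z \<in> {0..\<lfloor>L/2\<rfloor>}" for z
    using that by (simp add: le_floor_iff)
  have "h / 2 = h / L * (L / 2)" using L_ge_1 by simp
  also have "\<dots> \<le> h / L * card {0..\<lfloor>L/2\<rfloor>}"
  proof (intro mult_left_mono)
    have "real (card {0..\<lfloor>L/2\<rfloor>}) = \<lfloor>L/2\<rfloor> + 1" using L_ge_1 by simp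
    then show "L / 2 \<le> real (card {0..\<lfloor>L/2\<rfloor>})" by linarith
  qed (use h_pos L_ge_1 in simp)
  also have "\<dots> \<le> h / L * (\<Sum>z=0..\<lfloor>L/2\<rfloor>. 1 + cos (real_of_int z * \<theta>))"
  proof (intro mult_left_mono)
    have "1 \<le> 1 + cos (real_of_int z * \<theta>)" if "z \<in> {0..\<lfloor>L/2\<rfloor>}" for z
    proof -
      have "\<bar>real_of_int z * \<theta>\<bar> \<le> L / 2 * \<bar>\<theta>\<bar>"
        using half[OF that] mult_right_mono[of "real_of_int z" "L/2" "\<bar>\<theta>\<bar>"] by (simp add: abs_mult)
      then have "\<bar>real_of_int z * \<theta>\<bar> \<le> pi / 2"
        using \<open>L * \<bar>\<theta>\<bar> \<le> 2\<close> pi_gt3 by linarith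
      then show ?thesis using cos_ge_zero[of "real_of_int z * \<theta>"] by simp
    qed
    then show "real (card {0..\<lfloor>L/2\<rfloor>}) \<le> (\<Sum>z=0..\<lfloor>L/2\<rfloor>. 1 + cos (real_of_int z * \<theta>))"
      using sum_mono[of "{0..\<lfloor>L/2\<rfloor>}" "\<lambda>_. 1::real"] by simp
  qed (use h_pos L_ge_1 in auto)
  also have "\<dots> \<le> (\<Sum>z=0..\<lfloor>L/2\<rfloor>. p z * (1 + cos (real_of_int z * \<theta>)))"
    using half L_ge_1 by (intro window_sum_ge one_plus_cos_nonneg) fastforce
  finally show ?thesis .
qed

text \<open>By the Dirichlet kernel bound the cosines sum to at most \<open>(12L + 6)/7\<close> in absolute value
  over the \<open>2\<lfloor>L\<rfloor> + 1 \<ge> 2L - 1\<close> points of the window; for \<open>L \<ge> 13\<close> this leaves a margin of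
  \<open>L/7\<close> whatever the sign \<open>s\<close>.\<close>
lemma cos_mass_large_angle:
  assumes "13 \<le> L" and "4 / (2 * L + 1) < \<bar>\<theta>\<bar>" "\<bar>\<theta>\<bar> \<le> pi" and "\<bar>s\<bar> = 1"
  shows "h / 7 \<le> (\<Sum>z=-\<lfloor>L\<rfloor>..\<lfloor>L\<rfloor>. p z * (1 + s * cos (real_of_int z * \<theta>)))"
proof -
  define n where "n = nat \<lfloor>L\<rfloor>"
  have n: "L - 1 \<le> real n" "real n \<le> L" "\<lfloor>L\<rfloor> = int n"
    using assms(1) unfolding n_def by linarith+
  define D where "D = (\<Sum>z=-\<lfloor>L\<rfloor>..\<lfloor>L\<rfloor>. cos (real_of_int z * \<theta>))"
  have "0 < 4 / (2 * L + 1)" using assms(1) by simp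
  then have "0 < \<bar>\<theta>\<bar>" using assms(2) by linarith
  then have sin_ge: "7/24 * \<bar>\<theta>\<bar> \<le> \<bar>sin (\<theta>/2)\<bar>" "0 < \<bar>sin (\<theta>/2)\<bar>"
    using abs_sin_half_ge[OF assms(3)] by auto
  have "\<bar>D\<bar> \<le> 1 / \<bar>sin (\<theta>/2)\<bar>"
    unfolding D_def n(3) using sin_ge by (intro abs_sum_cos_le) auto
  also have "\<dots> \<le> 1 / (7/24 * \<bar>\<theta>\<bar>)"
    using sin_ge \<open>0 < \<bar>\<theta>\<bar>\<close> by (intro divide_left_mono) auto
  also have "\<dots> \<le> 24/7 * ((2 * L + 1) / 4)"
    using assms(1,2) \<open>0 < \<bar>\<theta>\<bar>\<close> by (simp add: field_simps)
  finally have D: "\<bar>D\<bar> \<le> (12 * L + 6) / 7" by simp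
  have "h / 7 = h / L * (L / 7)" using assms(1) by simp
  also have "\<dots> \<le> h / L * (2 * real n + 1 + s * D)"
  proof (intro mult_left_mono)
    have "- \<bar>D\<bar> \<le> s * D" using assms(4) by (cases "s = 1") (auto simp: abs_if split: if_splits)
    then show "L / 7 \<le> 2 * real n + 1 + s * D" using D n(1) assms(1) by (simp add: field_simps)
  qed (use h_pos assms(1) in auto)
  also have "\<dots> = h / L * (\<Sum>z=-\<lfloor>L\<rfloor>..\<lfloor>L\<rfloor>. 1 + s * cos (real_of_int z * \<theta>))"
    using n(3) by (simp add: D_def sum.distrib sum_distrib_left)
  also have "\<dots> \<le> (\<Sum>z=-\<lfloor>L\<rfloor>..\<lfloor>L\<rfloor>. p z * (1 + s * cos (real_of_int z * \<theta>)))"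
  proof (rule window_sum_ge)
    show "\<bar>real_of_int z\<bar> \<le> L" if "z \<in> {-\<lfloor>L\<rfloor>..\<lfloor>L\<rfloor>}" for z
    proof -
      from that have "\<bar>z\<bar> \<le> \<lfloor>L\<rfloor>" by auto
      then show ?thesis by (simp add: le_floor_iff)
    qed
    show "0 \<le> 1 + s * cos (real_of_int z * \<theta>)" for z
    proof -
      have "\<bar>s * cos (real_of_int z * \<theta>)\<bar> \<le> 1" using assms(4) by (simp add: abs_mult)
      then show ?thesis by linarith
    qed
  qed
  finally show ?thesis .
qed

lemma cos_mass_large_angle_narrow_window:
  assumes "L < 13" and "4 / (2 * L + 1) < \<bar>\<theta>\<bar>" "\<bar>\<theta>\<bar> \<le> pi"
  shows "h / 13 \<le> p 0" and "h / 13 * (4/27)\<^sup>2 / 12 \<le> p 1 * (1 - cos \<theta>)"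
proof -
  have "h / 13 \<le> h / L" using assms(1) L_ge_1 h_pos by (intro divide_left_mono) auto
  moreover have "h / L \<le> p z" if "\<bar>z\<bar> \<le> 1" for z
  proof (rule window)
    have "\<bar>real_of_int z\<bar> \<le> 1" using that by linarith
    then show "\<bar>real_of_int z\<bar> \<le> L" using L_ge_1 by linarith
  qed
  ultimately have near_0: "h / 13 \<le> p z" if "\<bar>z\<bar> \<le> 1" for z
    using that by (metis order_trans)
  then show "h / 13 \<le> p 0" by simp
  have p1: "h / 13 \<le> p 1" using near_0[of 1] by simp
  have "4/27 \<le> 4 / (2 * L + 1)" using assms(1) L_ge_1 by (intro divide_left_mono) auto
  then have "(4/27)\<^sup>2 \<le> \<theta>\<^sup>2"
    using assms(2) power_mono[of "4/27" "\<bar>\<theta>\<bar>" 2] by simp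
  moreover have "\<theta>\<^sup>2 \<le> 10"
    using assms(3) pi_approx power_mono[of "\<bar>\<theta>\<bar>" "3.15" 2] by (simp add: power2_eq_square)
  ultimately have "(4/27)\<^sup>2 / 12 \<le> 1 - cos \<theta>"
    using one_minus_cos_ge[of \<theta> 10] by simp
  then show "h / 13 * (4/27)\<^sup>2 / 12 \<le> p 1 * (1 - cos \<theta>)"
    using p1 h_pos mult_mono[of "h/13" "p 1" "(4/27)\<^sup>2 / 12" "1 - cos \<theta>"] by simp
qed

end

locale symmetric_window_pmf = window_lower_bound +
  assumes has_sum_1: "(p has_sum 1) UNIV" and nonneg: "\<And>z. 0 \<le> p z"
    and symmetric: "\<And>z. p z = p (-z)"
begin

lemma norm_char_fun_small_angle:
  assumes "\<bar>\<theta>\<bar> \<le> 4 / (2 * L + 1)"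
  shows "cmod (char_fun p \<theta>) \<le> 1 - h / 72 * L\<^sup>2 * \<theta>\<^sup>2"
proof (rule norm_char_fun_le[OF has_sum_1 nonneg symmetric])
  have "L * \<bar>\<theta>\<bar> \<le> 2" using assms L_ge_1 by (intro mult_le_2_of_small_angle) auto
  then have "L\<^sup>2 * \<theta>\<^sup>2 \<le> 4"
    using power_mono[of "L * \<bar>\<theta>\<bar>" 2 2] L_ge_1 by (simp add: power_mult_distrib)
  then have "h / 72 * L\<^sup>2 * \<theta>\<^sup>2 \<le> h / 2" using h_pos by (simp add: field_simps)
  then show "h / 72 * L\<^sup>2 * \<theta>\<^sup>2 \<le> (\<Sum>z=0..\<lfloor>L/2\<rfloor>. p z * (1 + cos (real_of_int z * \<theta>)))"
    using one_plus_cos_mass_small_angle[OF assms] by linarith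
qed (use one_minus_cos_mass_small_angle[OF assms] in auto)

lemma norm_char_fun_large_angle:
  assumes "4 / (2 * L + 1) < \<bar>\<theta>\<bar>" "\<bar>\<theta>\<bar> \<le> pi"
  shows "cmod (char_fun p \<theta>) \<le> 1 - h / 13 * (4/27)\<^sup>2 / 12"
proof (cases "L < 13")
  case True
  note narrow = cos_mass_large_angle_narrow_window[OF True assms]
  show ?thesis
  proof (rule norm_char_fun_le[OF has_sum_1 nonneg symmetric, where F = "{1}" and G = "{0}"])
    show "h / 13 * (4/27)\<^sup>2 / 12 \<le> (\<Sum>z\<in>{0}. p z * (1 + cos (real_of_int z * \<theta>)))"
    proof -
      have "h / 13 * (4/27)\<^sup>2 / 12 \<le> h / 13" using h_pos by (simp add: power2_eq_square)
      then show ?thesis using narrow(1) nonneg[of 0] by simp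
    qed
  qed (use narrow(2) in auto)
next
  case False
  have "h / 13 * (4/27)\<^sup>2 / 12 \<le> h / 7" using h_pos by (simp add: power2_eq_square)
  then show ?thesis
    using cos_mass_large_angle[of \<theta> "-1"] cos_mass_large_angle[of \<theta> 1] False assms
    by (intro norm_char_fun_le[OF has_sum_1 nonneg symmetric, where F = "{-\<lfloor>L\<rfloor>..\<lfloor>L\<rfloor>}"
          and G = "{-\<lfloor>L\<rfloor>..\<lfloor>L\<rfloor>}"]) auto
qed

end

lemma uniform_exp_bound_off_origin:
  fixes f :: "nat \<Rightarrow> real \<Rightarrow> real" and a b \<epsilon> :: real
  assumes "0 < a" "0 < b" "0 < \<epsilon>" and "1 \<le> N0"
    and small: "\<And>N \<theta>. N \<ge> N0 \<Longrightarrow> \<bar>\<theta>\<bar> \<le> 4 / (2 * sqrt (real N) + 1) \<Longrightarrow>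
                  f N \<theta> \<le> 1 - b * real N * \<theta>\<^sup>2"
    and large: "\<And>N \<theta>. N \<ge> N0 \<Longrightarrow> 4 / (2 * sqrt (real N) + 1) < \<bar>\<theta>\<bar> \<Longrightarrow> \<bar>\<theta>\<bar> \<le> pi \<Longrightarrow>
                  f N \<theta> \<le> 1 - a"
  shows "\<exists>c>0. \<forall>N\<ge>N0. \<forall>\<theta>. \<epsilon> / sqrt (real N) < \<bar>\<theta>\<bar> \<and> \<bar>\<theta>\<bar> \<le> pi \<longrightarrow> f N \<theta> \<le> exp (- c)"
proof -
  define m where "m = min (min a (b * \<epsilon>\<^sup>2)) (1/2)"
  have m: "0 < m" "m \<le> 1/2" "m \<le> a" "m \<le> b * \<epsilon>\<^sup>2"
    using assms(1-3) unfolding m_def by auto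
  have "f N \<theta> \<le> 1 - m" if N: "N \<ge> N0" and \<theta>: "\<epsilon> / sqrt (real N) < \<bar>\<theta>\<bar>" "\<bar>\<theta>\<bar> \<le> pi" for N \<theta>
  proof (cases "\<bar>\<theta>\<bar> \<le> 4 / (2 * sqrt (real N) + 1)")
    case True
    have "\<epsilon> < sqrt (real N) * \<bar>\<theta>\<bar>" using \<theta>(1) assms(4) N by (simp add: field_simps)
    then have "\<epsilon>\<^sup>2 \<le> real N * \<theta>\<^sup>2"
      using power_mono[of \<epsilon> "sqrt (real N) * \<bar>\<theta>\<bar>" 2] assms(3) by (simp add: power_mult_distrib)
    then have "b * \<epsilon>\<^sup>2 \<le> b * (real N * \<theta>\<^sup>2)" using assms(2) by (intro mult_left_mono) auto
    then have "m \<le> b * real N * \<theta>\<^sup>2" using m(4) by (simp only: mult.assoc)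
    then show ?thesis using small[OF N True] by linarith
  next
    case False
    then show ?thesis using large[OF N _ \<theta>(2)] m(3) by fastforce
  qed
  moreover have "exp (ln (1 - m)) = 1 - m" using m(2) by simp
  ultimately show ?thesis
    using m(1,2) by (intro exI[of _ "- ln (1 - m)"]) auto
qed

theorem lemma6:
  fixes q :: "nat \<Rightarrow> int \<Rightarrow> real" and \<sigma>N :: "nat \<Rightarrow> real" and \<sigma> :: real and N0 :: nat
  assumes N0: "N0 \<ge> 1"
    and prob_nonneg: "\<And>N z. N \<ge> N0 \<Longrightarrow> q N z \<ge> 0"
    and prob_sum: "\<And>N. N \<ge> N0 \<Longrightarrow> (q N has_sum 1) UNIV"
    and sym: "\<And>N z. N \<ge> N0 \<Longrightarrow> q N z = q N (- z)"
    and var: "\<And>N. N \<ge> N0 \<Longrightarrow>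
               ((\<lambda>z. (real_of_int z)\<^sup>2 * q N z) has_sum (\<sigma>N N)\<^sup>2 * real N) UNIV"
    and var_lim: "\<sigma>N \<longlonglongrightarrow> \<sigma>" and \<sigma>_pos: "0 < \<sigma>"
    and lower: "\<exists>h>0. \<forall>N\<ge>N0. \<forall>z. \<bar>real_of_int z\<bar> \<le> sqrt (real N) \<longrightarrow> q N z \<ge> h / sqrt (real N)"
    and tail: "\<exists>c>0. \<exists>C>0. \<forall>N\<ge>N0. \<forall>z. q N z \<le> C * exp (- c * \<bar>real_of_int z\<bar> / sqrt (real N))"
    and support: "\<exists>B. \<forall>N\<ge>N0. \<forall>z. \<bar>real_of_int z\<bar> > B * sqrt (real N) * ln (real N) \<longrightarrow> q N z = 0"
  shows "(\<exists>a>0. \<exists>b>0. \<forall>N\<ge>N0. \<forall>\<theta>::real.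
            (\<bar>\<theta>\<bar> \<le> 4 / (2 * sqrt (real N) + 1) \<longrightarrow>
               cmod (char_fun (q N) \<theta>) \<le> 1 - b * real N * \<theta>\<^sup>2) \<and>
            (4 / (2 * sqrt (real N) + 1) < \<bar>\<theta>\<bar> \<and> \<bar>\<theta>\<bar> \<le> pi \<longrightarrow>
               cmod (char_fun (q N) \<theta>) \<le> 1 - a))
         \<and> (\<forall>\<epsilon>. 0 < \<epsilon> \<and> \<epsilon> \<le> pi \<longrightarrow>
             (\<exists>c>0. \<forall>N\<ge>N0. \<forall>\<theta>::real. \<epsilon> / sqrt (real N) < \<bar>\<theta>\<bar> \<and> \<bar>\<theta>\<bar> \<le> pi \<longrightarrow>
                cmod (char_fun (q N) \<theta>) \<le> exp (- c)))"
proof -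
  \<comment> \<open>Only normalisation, symmetry and the lower bound (3) are needed.\<close>
  obtain h where h: "0 < h"
    and low: "\<forall>N\<ge>N0. \<forall>z. \<bar>real_of_int z\<bar> \<le> sqrt (real N) \<longrightarrow> h / sqrt (real N) \<le> q N z"
    using lower by blast
  have pmf: "symmetric_window_pmf (q N) (sqrt (real N)) h" if "N \<ge> N0" for N
  proof unfold_locales
    show "1 \<le> sqrt (real N)" using that N0 by simp
    show "(q N has_sum 1) UNIV" "0 \<le> q N z" "q N z = q N (- z)" for z
      using that prob_sum prob_nonneg sym by blast+
  qed (use that h low in auto)
  define a where "a = h / 13 * (4/27)\<^sup>2 / 12"
  define b where "b = h / 72"
  have "0 < a" "0 < b" using h by (simp_all add: a_def b_def)
  have small: "cmod (char_fun (q N) \<theta>) \<le> 1 - b * real N * \<theta>\<^sup>2"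
    if "N \<ge> N0" "\<bar>\<theta>\<bar> \<le> 4 / (2 * sqrt (real N) + 1)" for N \<theta>
    using symmetric_window_pmf.norm_char_fun_small_angle[OF pmf that(2)] that(1) by (simp add: b_def)
  have large: "cmod (char_fun (q N) \<theta>) \<le> 1 - a"
    if "N \<ge> N0" "4 / (2 * sqrt (real N) + 1) < \<bar>\<theta>\<bar>" "\<bar>\<theta>\<bar> \<le> pi" for N \<theta>
    using symmetric_window_pmf.norm_char_fun_large_angle[OF pmf that(2,3)] that(1) by (simp add: a_def)
  show ?thesis
    using \<open>0 < a\<close> \<open>0 < b\<close> N0 small large
    by (intro conjI allI impI uniform_exp_bound_off_origin[where a = a and b = b]) blast+
qed

end
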